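(* Let $R$ be a finite group and let $\varphi$ be a non-identity automorphism of $R$. Then one of the following holds: (1) the number of inverse-closed subsets $S\subseteq R$ with $S^\varphi=S$ is at most $2^{\mathbf{c}(R)-|R|/96}$; (2) $A:=C_R(\varphi)$ is abelian of exponent greater than $2$ and has index $2$ in $R$, there is $x\in R\setminus A$ with $x^2$ an involution of $A$ and $xax^{-1}=a^{-1}$ for all $a\in A$ (so $R$ is generalized dicyclic over $A$), and $\varphi=\bar\iota_A$; (3) $R$ is abelian of exponent greater than $2$ and $\varphi=\iota$.
   Context: $\mathbf{I}(R)=\{x\in R\mid x^2=1\}$, $\mathbf{c}(R)=(|R|+|\mathbf{I}(R)|)/2$. A subset $S$ is inverse-closed if $S^{-1}=S$. $C_R(\varphi)=\{x\in R\mid x^\varphi=x\}$. $\iota:R\to R$ is $x\mapsto x^{-1}$. Generalized dicyclic: for $A$ abelian of even order and exponent $>2$ and $y$ an involution of $A$, $\mathrm{Dic}(A,y,x)=\langle A,x\mid x^2=y,\ x^{-1}ax=a^{-1}\ \forall a\in A\rangle$; $\bar\iota_A$ is the automorphism with $a^{\bar\iota_A}=a$ and $(ax)^{\bar\iota_A}=ax^{-1}$ for all $a\in A$. *)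

theory Defs
  imports Complex_Main "HOL-Algebra.Group"
begin

definition involution_set :: "('a, 'b) monoid_scheme \<Rightarrow> 'a set" where
  "involution_set G = {x \<in> carrier G. x \<otimes>\<^bsub>G\<^esub> x = \<one>\<^bsub>G\<^esub>}"

definition c_num :: "('a, 'b) monoid_scheme \<Rightarrow> real" where
  "c_num G = (real (card (carrier G)) + real (card (involution_set G))) / 2"

definition inverse_closed :: "('a, 'b) monoid_scheme \<Rightarrow> 'a set \<Rightarrow> bool" where
  "inverse_closed G S \<longleftrightarrow> (\<lambda>x. inv\<^bsub>G\<^esub> x) ` S = S"

definition centralizer_aut :: "('a, 'b) monoid_scheme \<Rightarrow> ('a \<Rightarrow> 'a) \<Rightarrow> 'a set" where
  "centralizer_aut G \<phi> = {x \<in> carrier G. \<phi> x = x}"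

end

theory Submission
  imports Defs
begin

text \<open>Let \<open>A = C\<^sub>R(\<phi>)\<close>, let \<open>B\<close> be the set of elements inverted by \<open>\<phi>\<close>, and let
  \<open>Q = R - (A \<union> B)\<close>. An inverse-closed \<open>\<phi>\<close>-invariant set is determined by its trace on a
  transversal \<open>T\<close> of the pairs \<open>{x, x\<inverse>}\<close>, and even on \<open>T - Y\<close> for any \<open>Y \<subseteq> Q \<inter> T\<close> disjoint
  from \<open>\<psi> Y\<close>, where \<open>\<psi>\<close> is the permutation of \<open>T\<close> induced by \<open>\<phi>\<close>. In the exponent, \<open>T\<close> saves half
  of the non-involutions and a maximal such \<open>Y\<close> a sixth of \<open>Q\<close> (a quarter if \<open>\<phi>\<^sup>2 = 1\<close>),
  which gives (1) unless \<open>|Q| < |R|/24\<close>.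

  If \<open>Q\<close> is that small, either \<open>\<phi>\<close> inverts more than three quarters of \<open>R\<close>, or \<open>A\<close> is large and
  conjugation by an inverted element outside \<open>A\<close> inverts more than three quarters of \<open>A\<close>. But a
  homomorphism inverting more than three quarters of a finite group inverts all of it, and the group
  is abelian; this rigidity yields (3) in the first case and (2) or (3) in the second.\<close>

section \<open>Sets invariant under an involution and a commuting bijection\<close>

lemma exists_subset_disjoint_image:
  assumes "finite Q" and "\<And>q. q \<in> Q \<Longrightarrow> f q \<noteq> q"
  obtains M where "M \<subseteq> Q" "M \<inter> f ` M = {}" "Q \<subseteq> M \<union> f ` M \<union> {q \<in> Q. f q \<in> M}"
proof -
  let ?F = "{M. M \<subseteq> Q \<and> M \<inter> f ` M = {}}"
  have "?F \<subseteq> Pow Q" by blast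
  then have "finite ?F" using assms(1) by (metis finite_Pow_iff finite_subset)
  moreover have "?F \<noteq> {}" by blast
  ultimately obtain M where M: "M \<subseteq> Q" "M \<inter> f ` M = {}"
    and max: "\<And>M'. M' \<subseteq> Q \<Longrightarrow> M' \<inter> f ` M' = {} \<Longrightarrow> M \<subseteq> M' \<Longrightarrow> M = M'"
    using finite_has_maximal by (smt (verit) mem_Collect_eq)
  have "Q \<subseteq> M \<union> f ` M \<union> {q \<in> Q. f q \<in> M}"
  proof
    fix q assume q: "q \<in> Q"
    show "q \<in> M \<union> f ` M \<union> {q \<in> Q. f q \<in> M}"
    proof (rule ccontr)
      assume q_new: "q \<notin> M \<union> f ` M \<union> {q \<in> Q. f q \<in> M}"
      then have "insert q M \<inter> f ` insert q M = {}" using M(2) assms(2)[OF q] q by auto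
      then have "M = insert q M" using max[of "insert q M"] M(1) q by blast
      then show False using q_new by blast
    qed
  qed
  then show ?thesis using M that by blast
qed

lemma card_le_double_if_subset_Un_image:
  assumes "finite M" and "Q \<subseteq> M \<union> f ` M"
  shows "card Q \<le> 2 * card M"
proof -
  have "card Q \<le> card (M \<union> f ` M)" using assms by (intro card_mono) auto
  also have "\<dots> \<le> card M + card (f ` M)" by (rule card_Un_le)
  also have "\<dots> \<le> 2 * card M" using card_image_le[OF assms(1), of f] by simp
  finally show ?thesis .
qed

lemma card_le_two_pow_if_inj_on_Int:
  assumes "inj_on (\<lambda>S. S \<inter> N) V" and "finite N"
  shows "card V \<le> 2 ^ card N"
proof -
  have "card V \<le> card (Pow N)"
    using assms by (intro card_inj_on_le[of "\<lambda>S. S \<inter> N"]) auto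
  then show ?thesis using assms(2) by (simp add: card_Pow)
qed

lemma inj_on_Int_Diff_if_partner:
  assumes "\<And>S. S \<in> V \<Longrightarrow> S \<subseteq> D"
    and "\<And>x. x \<in> M \<Longrightarrow> \<sigma> x \<in> D - M"
    and "\<And>S x. S \<in> V \<Longrightarrow> x \<in> M \<Longrightarrow> \<sigma> x \<in> S \<longleftrightarrow> x \<in> S"
  shows "inj_on (\<lambda>S. S \<inter> (D - M)) V"
proof (rule inj_onI)
  fix S S' assume S: "S \<in> V" and S': "S' \<in> V" and eq: "S \<inter> (D - M) = S' \<inter> (D - M)"
  have "x \<in> S \<longleftrightarrow> x \<in> S'" if "x \<in> D" for x
  proof (cases "x \<in> M")
    case True
    then have "\<sigma> x \<in> D - M" by (rule assms(2))
    then have "\<sigma> x \<in> S \<longleftrightarrow> \<sigma> x \<in> S'" using eq by blast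
    then show ?thesis using assms(3)[OF S True] assms(3)[OF S' True] by simp
  next
    case False
    then show ?thesis using that eq by blast
  qed
  then show "S = S'" using assms(1) S S' by blast
qed

locale commuting_involution =
  fixes E :: "'a set" and \<iota> \<phi> :: "'a \<Rightarrow> 'a"
  assumes finite_E: "finite E"
    and \<iota>_closed: "x \<in> E \<Longrightarrow> \<iota> x \<in> E"
    and \<iota>_\<iota>: "x \<in> E \<Longrightarrow> \<iota> (\<iota> x) = x"
    and \<phi>_closed: "x \<in> E \<Longrightarrow> \<phi> x \<in> E"
    and inj_on_\<phi>: "inj_on \<phi> E"
    and \<phi>_\<iota>: "x \<in> E \<Longrightarrow> \<phi> (\<iota> x) = \<iota> (\<phi> x)"
begin

definition invariant_sets :: "'a set set" where
  "invariant_sets = {S. S \<subseteq> E \<and> \<iota> ` S = S \<and> \<phi> ` S = S}"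

definition mixed :: "'a set" where
  "mixed = {x \<in> E. \<phi> x \<noteq> x \<and> \<phi> x \<noteq> \<iota> x}"

definition \<iota>_half :: "'a set \<Rightarrow> bool" where
  "\<iota>_half X \<longleftrightarrow> X \<subseteq> E \<and> X \<inter> \<iota> ` X = {} \<and> {x \<in> E. \<iota> x \<noteq> x} \<subseteq> X \<union> \<iota> ` X"

text \<open>For an \<open>\<iota>\<close>-half \<open>X\<close> the complement \<open>E - X\<close> is a transversal of the \<open>\<iota>\<close>-orbits,
  and \<open>\<phi>_mod_\<iota> X\<close> is the permutation of it induced by \<open>\<phi>\<close>.\<close>
definition \<phi>_mod_\<iota> :: "'a set \<Rightarrow> 'a \<Rightarrow> 'a" where
  "\<phi>_mod_\<iota> X y = (if \<phi> y \<in> X then \<iota> (\<phi> y) else \<phi> y)"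

lemma \<iota>_eq_iff: "x \<in> E \<Longrightarrow> y \<in> E \<Longrightarrow> \<iota> x = \<iota> y \<longleftrightarrow> x = y"
  by (metis \<iota>_\<iota>)

lemma \<phi>_eq_iff: "x \<in> E \<Longrightarrow> y \<in> E \<Longrightarrow> \<phi> x = \<phi> y \<longleftrightarrow> x = y"
  using inj_on_\<phi> by (auto dest: inj_onD)

lemma invariant_sets_mem_iff:
  assumes "S \<in> invariant_sets" and "x \<in> E"
  shows "\<iota> x \<in> S \<longleftrightarrow> x \<in> S" and "\<phi> x \<in> S \<longleftrightarrow> x \<in> S"
proof -
  have S: "S \<subseteq> E" "\<iota> ` S = S" "\<phi> ` S = S" using assms(1) by (auto simp: invariant_sets_def)
  show "\<iota> x \<in> S \<longleftrightarrow> x \<in> S"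
    using S assms(2) by (metis \<iota>_\<iota> image_eqI)
  show "\<phi> x \<in> S \<longleftrightarrow> x \<in> S"
    using S assms(2) \<phi>_eq_iff by (metis image_iff subsetD)
qed

lemma \<iota>_mixed:
  assumes "x \<in> mixed" shows "\<iota> x \<in> mixed"
proof -
  have x: "x \<in> E" "\<phi> x \<noteq> x" "\<phi> x \<noteq> \<iota> x" using assms by (auto simp: mixed_def)
  have "\<phi> (\<iota> x) \<noteq> \<iota> x" using x \<phi>_\<iota> \<iota>_eq_iff \<phi>_closed by simp
  moreover have "\<phi> (\<iota> x) \<noteq> \<iota> (\<iota> x)" using x \<phi>_\<iota> \<iota>_\<iota> \<phi>_closed by metis
  ultimately show ?thesis using x \<iota>_closed by (simp add: mixed_def)
qed

lemma exists_\<iota>_half: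
  obtains X where "\<iota>_half X" and "card {x \<in> E. \<iota> x \<noteq> x} \<le> 2 * card X"
proof -
  let ?J = "{x \<in> E. \<iota> x \<noteq> x}"
  have fin: "finite ?J" using finite_E by simp
  have fpf: "\<And>x. x \<in> ?J \<Longrightarrow> \<iota> x \<noteq> x" by simp
  obtain X where X: "X \<subseteq> ?J" "X \<inter> \<iota> ` X = {}" "?J \<subseteq> X \<union> \<iota> ` X \<union> {x \<in> ?J. \<iota> x \<in> X}"
    by (rule exists_subset_disjoint_image[OF fin fpf])
  have "{x \<in> ?J. \<iota> x \<in> X} \<subseteq> \<iota> ` X"
  proof
    fix x assume "x \<in> {x \<in> ?J. \<iota> x \<in> X}"
    then have "x = \<iota> (\<iota> x)" "\<iota> x \<in> X" using \<iota>_\<iota> by auto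
    then show "x \<in> \<iota> ` X" by (rule image_eqI)
  qed
  then have cover: "?J \<subseteq> X \<union> \<iota> ` X" using X(3) by blast
  have "finite X" using X(1) fin by (rule finite_subset)
  then have "card ?J \<le> 2 * card X" using cover by (rule card_le_double_if_subset_Un_image)
  moreover have "\<iota>_half X" using X(1,2) cover by (auto simp: \<iota>_half_def)
  ultimately show ?thesis using that by blast
qed

lemma \<phi>_mod_\<iota>_cases: "\<phi>_mod_\<iota> X y = \<phi> y \<or> \<phi>_mod_\<iota> X y = \<iota> (\<phi> y)"
  by (simp add: \<phi>_mod_\<iota>_def)

lemma \<phi>_mod_\<iota>_neq:
  assumes "y \<in> mixed" shows "\<phi>_mod_\<iota> X y \<noteq> y"
proof -
  have y: "y \<in> E" "\<phi> y \<noteq> y" "\<phi> y \<noteq> \<iota> y" using assms by (auto simp: mixed_def)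
  have "\<iota> (\<phi> y) \<noteq> y" using y(3) \<iota>_\<iota>[OF \<phi>_closed[OF y(1)]] by auto
  then show ?thesis using y(2) \<phi>_mod_\<iota>_cases[of X y] by auto
qed

lemma \<phi>_mod_\<iota>_mem_iff:
  assumes S: "S \<in> invariant_sets" and y: "y \<in> E"
  shows "\<phi>_mod_\<iota> X y \<in> S \<longleftrightarrow> y \<in> S"
  using invariant_sets_mem_iff[OF S y] invariant_sets_mem_iff[OF S \<phi>_closed[OF y]]
    \<phi>_mod_\<iota>_cases[of X y] by auto

context
  fixes X assumes half: "\<iota>_half X"
begin

lemma \<iota>_mem_half:
  assumes y: "y \<in> E - X" and "\<iota> y \<noteq> y" shows "\<iota> y \<in> X"
proof -
  have "y \<in> \<iota> ` X" using half assms unfolding \<iota>_half_def by blast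
  then obtain x where "x \<in> X" "y = \<iota> x" by blast
  then show ?thesis using half \<iota>_\<iota> unfolding \<iota>_half_def by auto
qed

lemma \<phi>_mod_\<iota>_closed: "y \<in> E \<Longrightarrow> \<phi>_mod_\<iota> X y \<in> E - X"
  using half \<phi>_closed \<iota>_closed unfolding \<iota>_half_def \<phi>_mod_\<iota>_def by auto

lemma inj_on_\<phi>_mod_\<iota>: "inj_on (\<phi>_mod_\<iota> X) (E - X)"
proof (rule inj_onI)
  have cross: "a = b" if ab: "\<phi> a = \<iota> (\<phi> b)" "a \<in> E - X" "b \<in> E - X" for a b
  proof -
    have "\<phi> a = \<phi> (\<iota> b)" using ab(1,3) \<phi>_\<iota> by simp
    then have "a = \<iota> b" using ab(2,3) \<phi>_eq_iff \<iota>_closed by blast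
    then show "a = b" using \<iota>_mem_half[OF ab(3)] ab(2) by blast
  qed
  fix y z assume y: "y \<in> E - X" and z: "z \<in> E - X" and eq: "\<phi>_mod_\<iota> X y = \<phi>_mod_\<iota> X z"
  have "\<phi> y = \<phi> z \<or> \<iota> (\<phi> y) = \<iota> (\<phi> z) \<or> \<phi> y = \<iota> (\<phi> z) \<or> \<phi> z = \<iota> (\<phi> y)"
    using eq \<phi>_mod_\<iota>_cases[of X y] \<phi>_mod_\<iota>_cases[of X z] by auto
  then show "y = z"
    using cross[OF _ y z] cross[OF _ z y] y z \<phi>_eq_iff \<iota>_eq_iff \<phi>_closed by auto
qed

lemma \<phi>_mod_\<iota>_involutive:
  assumes "\<forall>x\<in>E. \<phi> (\<phi> x) = x" and y: "y \<in> E - X"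
  shows "\<phi>_mod_\<iota> X (\<phi>_mod_\<iota> X y) = y"
proof -
  have "\<phi> (\<phi> y) = y" "\<phi> (\<iota> (\<phi> y)) = \<iota> y" using assms \<phi>_\<iota> \<phi>_closed by auto
  then have "\<phi>_mod_\<iota> X (\<phi>_mod_\<iota> X y) \<in> {y, \<iota> y}"
    using \<phi>_mod_\<iota>_cases[of X y] \<phi>_mod_\<iota>_cases[of X "\<phi>_mod_\<iota> X y"] \<iota>_\<iota> y by auto
  moreover have "\<phi>_mod_\<iota> X (\<phi>_mod_\<iota> X y) \<in> E - X" using \<phi>_mod_\<iota>_closed y by blast
  ultimately show ?thesis using \<iota>_mem_half[OF y] by (cases "\<iota> y = y") auto
qed

lemma card_mixed_le_double: "card mixed \<le> 2 * card (mixed - X)"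
proof (rule card_le_double_if_subset_Un_image)
  show "finite (mixed - X)" using finite_E by (simp add: mixed_def)
  show "mixed \<subseteq> (mixed - X) \<union> \<iota> ` (mixed - X)"
  proof
    fix y assume y: "y \<in> mixed"
    show "y \<in> (mixed - X) \<union> \<iota> ` (mixed - X)"
    proof (cases "y \<in> X")
      case True
      then have "\<iota> y \<in> mixed - X" using half \<iota>_mixed[OF y] unfolding \<iota>_half_def by blast
      moreover have "y = \<iota> (\<iota> y)" using y \<iota>_\<iota> by (simp add: mixed_def)
      ultimately show ?thesis by blast
    qed (use y in blast)
  qed
qed

end

lemma exists_mixed_subset_disjoint_image:
  assumes half: "\<iota>_half X"
  obtains Y where "Y \<subseteq> mixed - X" "Y \<inter> \<phi>_mod_\<iota> X ` Y = {}" "card mixed \<le> 6 * card Y"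
    "(\<forall>x\<in>E. \<phi> (\<phi> x) = x) \<longrightarrow> card mixed \<le> 4 * card Y"
proof -
  let ?\<psi> = "\<phi>_mod_\<iota> X"
  have fin: "finite (mixed - X)" using finite_E by (simp add: mixed_def)
  have fpf: "\<And>y. y \<in> mixed - X \<Longrightarrow> ?\<psi> y \<noteq> y" using \<phi>_mod_\<iota>_neq by blast
  obtain Y where Y: "Y \<subseteq> mixed - X" "Y \<inter> ?\<psi> ` Y = {}"
      "mixed - X \<subseteq> Y \<union> ?\<psi> ` Y \<union> {y \<in> mixed - X. ?\<psi> y \<in> Y}"
    by (rule exists_subset_disjoint_image[OF fin fpf])
  have finY: "finite Y" using Y(1) fin by (rule finite_subset)
  have inj: "inj_on ?\<psi> (mixed - X)"
    using inj_on_\<phi>_mod_\<iota>[OF half] by (rule inj_on_subset) (auto simp: mixed_def)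
  let ?Z = "{y \<in> mixed - X. ?\<psi> y \<in> Y}"
  have "card ?Z \<le> card Y"
    using inj_on_subset[OF inj, of ?Z] finY by (intro card_inj_on_le[of ?\<psi>]) auto
  moreover have "card (?\<psi> ` Y) \<le> card Y" by (rule card_image_le[OF finY])
  moreover have "finite ?Z" by (rule finite_subset[OF _ fin]) blast
  then have "card (mixed - X) \<le> card (Y \<union> ?\<psi> ` Y \<union> ?Z)"
    using Y(3) finY by (intro card_mono) auto
  moreover have "card (Y \<union> ?\<psi> ` Y \<union> ?Z) \<le> card Y + card (?\<psi> ` Y) + card ?Z"
    using card_Un_le[of Y "?\<psi> ` Y"] card_Un_le[of "Y \<union> ?\<psi> ` Y" ?Z] by linarith
  ultimately have "card (mixed - X) \<le> 3 * card Y" by linarith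
  then have c6: "card mixed \<le> 6 * card Y" using card_mixed_le_double[OF half] by linarith
  have c4: "(\<forall>x\<in>E. \<phi> (\<phi> x) = x) \<longrightarrow> card mixed \<le> 4 * card Y"
  proof
    assume involutive: "\<forall>x\<in>E. \<phi> (\<phi> x) = x"
    have "{y \<in> mixed - X. ?\<psi> y \<in> Y} \<subseteq> ?\<psi> ` Y"
    proof
      fix y assume y: "y \<in> {y \<in> mixed - X. ?\<psi> y \<in> Y}"
      then have "y = ?\<psi> (?\<psi> y)" using \<phi>_mod_\<iota>_involutive[OF half involutive] by (simp add: mixed_def)
      then show "y \<in> ?\<psi> ` Y" using y by blast
    qed
    then have "card (mixed - X) \<le> 2 * card Y"
      using Y(3) finY by (intro card_le_double_if_subset_Un_image) auto
    then show "card mixed \<le> 4 * card Y" using card_mixed_le_double[OF half] by linarith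
  qed
  show ?thesis using Y(1,2) c6 c4 by (rule that)
qed

lemma inj_on_Int_transversal:
  assumes half: "\<iota>_half X" and Y: "Y \<subseteq> E - X" "Y \<inter> \<phi>_mod_\<iota> X ` Y = {}"
  shows "inj_on (\<lambda>S. S \<inter> (E - X - Y)) invariant_sets"
proof -
  have "inj_on (\<lambda>S. S \<inter> (E - X)) invariant_sets"
  proof (rule inj_on_Int_Diff_if_partner)
    show "S \<subseteq> E" if "S \<in> invariant_sets" for S using that by (simp add: invariant_sets_def)
    show "\<iota> x \<in> E - X" if "x \<in> X" for x using half that \<iota>_closed unfolding \<iota>_half_def by blast
    show "\<iota> x \<in> S \<longleftrightarrow> x \<in> S" if "S \<in> invariant_sets" "x \<in> X" for S x
      using invariant_sets_mem_iff(1)[OF that(1)] half that(2) unfolding \<iota>_half_def by blast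
  qed
  moreover have "inj_on (\<lambda>S'. S' \<inter> (E - X - Y)) ((\<lambda>S. S \<inter> (E - X)) ` invariant_sets)"
  proof (rule inj_on_Int_Diff_if_partner)
    show "S' \<subseteq> E - X" if "S' \<in> (\<lambda>S. S \<inter> (E - X)) ` invariant_sets" for S' using that by blast
    show "\<phi>_mod_\<iota> X y \<in> E - X - Y" if "y \<in> Y" for y
      using that Y \<phi>_mod_\<iota>_closed[OF half] by blast
    show "\<phi>_mod_\<iota> X y \<in> S' \<longleftrightarrow> y \<in> S'"
      if S': "S' \<in> (\<lambda>S. S \<inter> (E - X)) ` invariant_sets" and y: "y \<in> Y" for S' y
    proof -
      obtain S where S: "S \<in> invariant_sets" "S' = S \<inter> (E - X)" using S' by blast
      have "y \<in> E - X" "\<phi>_mod_\<iota> X y \<in> E - X" using y Y \<phi>_mod_\<iota>_closed[OF half] by blast+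
      then show ?thesis using \<phi>_mod_\<iota>_mem_iff[OF S(1)] S(2) by blast
    qed
  qed
  ultimately have "inj_on ((\<lambda>S'. S' \<inter> (E - X - Y)) \<circ> (\<lambda>S. S \<inter> (E - X))) invariant_sets"
    by (rule comp_inj_on)
  moreover have "(\<lambda>S'. S' \<inter> (E - X - Y)) \<circ> (\<lambda>S. S \<inter> (E - X)) = (\<lambda>S. S \<inter> (E - X - Y))"
    by auto
  ultimately show ?thesis by simp
qed

lemma card_mixed_div_le:
  assumes d: "6 \<le> d \<or> 4 \<le> d \<and> (\<forall>x\<in>E. \<phi> (\<phi> x) = x)"
    and "card mixed \<le> 6 * m" and "(\<forall>x\<in>E. \<phi> (\<phi> x) = x) \<longrightarrow> card mixed \<le> 4 * m"
  shows "card mixed / d \<le> m"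
proof -
  have "real (card mixed) \<le> d * m"
  proof (cases "6 \<le> d")
    case True
    have "real (card mixed) \<le> 6 * real m" using assms(2) by linarith
    also have "\<dots> \<le> d * m" using True by (intro mult_right_mono) auto
    finally show ?thesis .
  next
    case False
    then have "4 \<le> d" and involutive: "\<forall>x\<in>E. \<phi> (\<phi> x) = x" using d by auto
    have "real (card mixed) \<le> 4 * real m" using assms(3) involutive by linarith
    also have "\<dots> \<le> d * m" using \<open>4 \<le> d\<close> by (intro mult_right_mono) auto
    finally show ?thesis .
  qed
  moreover have "0 < d" using d by auto
  ultimately show ?thesis by (simp add: pos_divide_le_eq mult.commute)
qed

theorem card_invariant_sets_le:
  assumes "6 \<le> d \<or> 4 \<le> d \<and> (\<forall>x\<in>E. \<phi> (\<phi> x) = x)"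
  shows "real (card invariant_sets)
    \<le> 2 powr (card E - card {x \<in> E. \<iota> x \<noteq> x} / 2 - card mixed / d)"
proof -
  obtain X where half: "\<iota>_half X" and X: "card {x \<in> E. \<iota> x \<noteq> x} \<le> 2 * card X"
    by (rule exists_\<iota>_half)
  obtain Y where Y: "Y \<subseteq> mixed - X" "Y \<inter> \<phi>_mod_\<iota> X ` Y = {}" "card mixed \<le> 6 * card Y"
      "(\<forall>x\<in>E. \<phi> (\<phi> x) = x) \<longrightarrow> card mixed \<le> 4 * card Y"
    using half by (rule exists_mixed_subset_disjoint_image)
  have YEX: "Y \<subseteq> E - X" using Y(1) by (auto simp: mixed_def)
  have XE: "X \<subseteq> E" using half by (simp add: \<iota>_half_def)
  have d: "card mixed / d \<le> card Y" using assms Y(3,4) by (rule card_mixed_div_le)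
  have "card invariant_sets \<le> 2 ^ card (E - X - Y)"
    using inj_on_Int_transversal[OF half YEX Y(2)] finite_E by (simp add: card_le_two_pow_if_inj_on_Int)
  then have "real (card invariant_sets) \<le> 2 powr card (E - X - Y)"
    by (simp add: powr_realpow flip: of_nat_le_iff)
  also have "\<dots> \<le> 2 powr (card E - card {x \<in> E. \<iota> x \<noteq> x} / 2 - card mixed / d)"
  proof (rule powr_mono)
    have "card (E - X - Y) = card E - card X - card Y"
      using XE YEX finite_E by (metis Diff_subset card_Diff_subset finite_Diff finite_subset)
    moreover have "card X + card Y \<le> card E"
    proof -
      have "card X + card Y = card (X \<union> Y)"
        using XE YEX finite_E by (subst card_Un_disjoint) (auto intro: finite_subset)
      also have "\<dots> \<le> card E" using XE YEX finite_E by (intro card_mono) auto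
      finally show ?thesis .
    qed
    ultimately show "real (card (E - X - Y)) \<le> card E - card {x \<in> E. \<iota> x \<noteq> x} / 2 - card mixed / d"
      using X d by simp
  qed simp
  finally show ?thesis .
qed

end

section \<open>Maps inverting most of a finite group\<close>

context group
begin

lemma inv_mult_cancel_left [simp]: "x \<in> carrier G \<Longrightarrow> z \<in> carrier G \<Longrightarrow> inv x \<otimes> (x \<otimes> z) = z"
  by (simp add: m_assoc[symmetric])

lemma card_subgroup_le_half:
  assumes H: "subgroup H G" and K: "subgroup K G" and "H \<subseteq> K" "H \<noteq> K" and fin: "finite K"
  shows "2 * card H \<le> card K"
proof -
  obtain g where g: "g \<in> K" "g \<notin> H" using assms(3,4) by blast
  have HG: "H \<subseteq> carrier G" and gG: "g \<in> carrier G"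
    using g H K subgroup.subset by blast+
  let ?Hg = "(\<lambda>h. h \<otimes> g) ` H"
  have "H \<inter> ?Hg = {}"
  proof (rule ccontr)
    assume "H \<inter> ?Hg \<noteq> {}"
    then obtain h where h: "h \<in> H" "h \<otimes> g \<in> H" by auto
    then have "inv h \<otimes> (h \<otimes> g) \<in> H" using H by (simp add: subgroup.m_closed subgroup.m_inv_closed)
    moreover have "inv h \<otimes> (h \<otimes> g) = g" using h(1) HG gG by (simp add: m_assoc[symmetric] subsetD)
    ultimately show False using g by simp
  qed
  moreover have "card ?Hg = card H"
    using HG gG by (intro card_image inj_onI) (metis subsetD right_cancel)
  moreover have "finite H" using assms(3) fin by (rule finite_subset)
  ultimately have "card (H \<union> ?Hg) = 2 * card H" by (simp add: card_Un_disjoint)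
  moreover have "H \<union> ?Hg \<subseteq> K" using assms(3) g K by (auto intro: subgroup.m_closed)
  then have "card (H \<union> ?Hg) \<le> card K" using fin by (rule card_mono[rotated])
  ultimately show ?thesis by simp
qed

lemma subgroup_eq_if_card_gt_half:
  "subgroup H G \<Longrightarrow> subgroup K G \<Longrightarrow> H \<subseteq> K \<Longrightarrow> finite K \<Longrightarrow> card K < 2 * card H \<Longrightarrow> H = K"
  using card_subgroup_le_half by fastforce

lemma commute_if_inv_commute:
  assumes "a \<in> carrier G" "b \<in> carrier G" and "inv b \<otimes> inv a = inv a \<otimes> inv b"
  shows "a \<otimes> b = b \<otimes> a"
proof -
  have "inv (a \<otimes> b) = inv (b \<otimes> a)" using assms by (simp add: inv_mult_group)
  then show ?thesis using assms(1,2) by (metis inv_inv m_closed)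
qed

lemma subgroup_centralizer_in:
  assumes K: "subgroup K G" and a: "a \<in> carrier G"
  shows "subgroup {b \<in> K. a \<otimes> b = b \<otimes> a} G"
proof (rule subgroupI)
  have KG: "K \<subseteq> carrier G" using K subgroup.subset by blast
  show "{b \<in> K. a \<otimes> b = b \<otimes> a} \<subseteq> carrier G" using KG by auto
  show "{b \<in> K. a \<otimes> b = b \<otimes> a} \<noteq> {}" using subgroup.one_closed[OF K] a by auto
  show "inv b \<in> {b \<in> K. a \<otimes> b = b \<otimes> a}" if "b \<in> {b \<in> K. a \<otimes> b = b \<otimes> a}" for b
  proof -
    have b: "b \<in> K" "b \<in> carrier G" "a \<otimes> b = b \<otimes> a" using that KG by auto
    have "a \<otimes> inv b = inv b \<otimes> (b \<otimes> a) \<otimes> inv b" using a b(2) by (simp add: m_assoc[symmetric])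
    also have "\<dots> = inv b \<otimes> (a \<otimes> b) \<otimes> inv b" using b(3) by simp
    also have "\<dots> = inv b \<otimes> a" using a b(2) by (simp add: m_assoc)
    finally show ?thesis using b K by (simp add: subgroup.m_inv_closed)
  qed
  show "b \<otimes> c \<in> {b \<in> K. a \<otimes> b = b \<otimes> a}"
    if "b \<in> {b \<in> K. a \<otimes> b = b \<otimes> a}" "c \<in> {b \<in> K. a \<otimes> b = b \<otimes> a}" for b c
  proof -
    have bc: "b \<in> K" "c \<in> K" "b \<in> carrier G" "c \<in> carrier G" "a \<otimes> b = b \<otimes> a" "a \<otimes> c = c \<otimes> a"
      using that KG by auto
    have "a \<otimes> (b \<otimes> c) = (a \<otimes> b) \<otimes> c" using a bc(3,4) by (simp add: m_assoc)
    also have "\<dots> = b \<otimes> (a \<otimes> c)" using a bc(3,4,5) by (simp add: m_assoc)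
    also have "\<dots> = (b \<otimes> c) \<otimes> a" using a bc(3,4,6) by (simp add: m_assoc)
    finally show ?thesis using bc K by (simp add: subgroup.m_closed)
  qed
qed

lemma subgroup_center_in:
  assumes K: "subgroup K G"
  shows "subgroup {z \<in> K. \<forall>b\<in>K. z \<otimes> b = b \<otimes> z} G"
proof -
  have KG: "K \<subseteq> carrier G" using K subgroup.subset by blast
  have "{z \<in> K. \<forall>b\<in>K. z \<otimes> b = b \<otimes> z} = \<Inter> ((\<lambda>a. {b \<in> K. a \<otimes> b = b \<otimes> a}) ` K)"
    using subgroup.one_closed[OF K] by auto
  also have "subgroup \<dots> G"
    using subgroup_centralizer_in[OF K] KG subgroup.one_closed[OF K] by (intro subgroups_Inter) auto
  finally show ?thesis .
qed

lemma mult_notin_subgroup: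
  assumes H: "subgroup H G" and a: "a \<in> H" and y: "y \<in> carrier G - H"
  shows "a \<otimes> y \<in> carrier G - H"
proof -
  have aG: "a \<in> carrier G" using a H subgroup.subset by blast
  have "a \<otimes> y \<notin> H"
  proof
    assume "a \<otimes> y \<in> H"
    then have "inv a \<otimes> (a \<otimes> y) \<in> H" using a H by (simp add: subgroup.m_closed subgroup.m_inv_closed)
    then show False using y aG by (simp add: m_assoc[symmetric])
  qed
  then show ?thesis using aG y by simp
qed

context
  fixes K and \<alpha> :: "'a \<Rightarrow> 'a"
  assumes K: "subgroup K G" and fin: "finite K"
    and \<alpha>_closed: "\<And>a. a \<in> K \<Longrightarrow> \<alpha> a \<in> carrier G"
    and \<alpha>_mult: "\<And>a b. a \<in> K \<Longrightarrow> b \<in> K \<Longrightarrow> \<alpha> (a \<otimes> b) = \<alpha> a \<otimes> \<alpha> b"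
    and inverts_most: "3 * card K < 4 * card {a \<in> K. \<alpha> a = inv a}"
begin

private lemma K_carrier: "K \<subseteq> carrier G"
  using K subgroup.subset by blast

lemma central_if_inverted:
  assumes a: "a \<in> K" "\<alpha> a = inv a"
  shows "\<forall>b\<in>K. a \<otimes> b = b \<otimes> a"
proof -
  define D where "D = {a \<in> K. \<alpha> a = inv a}"
  define E where "E = {b \<in> K. a \<otimes> b \<in> D}"
  have aG: "a \<in> carrier G" using a K_carrier by blast
  have "bij_betw (\<lambda>b. a \<otimes> b) E D"
  proof (rule bij_betw_byWitness[where f' = "\<lambda>d. inv a \<otimes> d"])
    show "\<forall>b\<in>E. inv a \<otimes> (a \<otimes> b) = b" "\<forall>d\<in>D. a \<otimes> (inv a \<otimes> d) = d"
      using aG K_carrier by (auto simp: E_def D_def m_assoc[symmetric])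
    show "(\<lambda>b. a \<otimes> b) ` E \<subseteq> D" by (auto simp: E_def)
    show "(\<lambda>d. inv a \<otimes> d) ` D \<subseteq> E"
      using a aG K_carrier K by (auto simp: E_def D_def m_assoc[symmetric] subgroup.m_closed subgroup.m_inv_closed)
  qed
  then have card_E: "card E = card D" by (rule bij_betw_same_card)
  have "D \<inter> E \<subseteq> {b \<in> K. a \<otimes> b = b \<otimes> a}"
  proof
    fix b assume "b \<in> D \<inter> E"
    then have b: "b \<in> K" "\<alpha> b = inv b" "a \<otimes> b \<in> K" "\<alpha> (a \<otimes> b) = inv (a \<otimes> b)"
      by (auto simp: D_def E_def)
    have bG: "b \<in> carrier G" using b K_carrier by blast
    have "inv b \<otimes> inv a = inv a \<otimes> inv b"
      using b a aG bG \<alpha>_mult by (simp add: inv_mult_group)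
    then show "b \<in> {b \<in> K. a \<otimes> b = b \<otimes> a}" using b(1) aG bG by (simp add: commute_if_inv_commute)
  qed
  then have "card (D \<inter> E) \<le> card {b \<in> K. a \<otimes> b = b \<otimes> a}" using fin by (intro card_mono) auto
  moreover have "card D + card E = card (D \<union> E) + card (D \<inter> E)"
    using fin by (intro card_Un_Int) (auto simp: D_def E_def)
  moreover have "card (D \<union> E) \<le> card K" using fin by (intro card_mono) (auto simp: D_def E_def)
  ultimately have "card K < 2 * card {b \<in> K. a \<otimes> b = b \<otimes> a}"
    using card_E inverts_most unfolding D_def by linarith
  then have "{b \<in> K. a \<otimes> b = b \<otimes> a} = K"
    using subgroup_centralizer_in[OF K aG] K fin by (intro subgroup_eq_if_card_gt_half) auto
  then show ?thesis by blast
qed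

lemma abelian_and_inverting_if_inverts_most:
  shows "\<forall>a\<in>K. \<forall>b\<in>K. a \<otimes> b = b \<otimes> a" and "\<forall>a\<in>K. \<alpha> a = inv a"
proof -
  define D where "D = {a \<in> K. \<alpha> a = inv a}"
  define Z where "Z = {z \<in> K. \<forall>b\<in>K. z \<otimes> b = b \<otimes> z}"
  have "D \<subseteq> Z" using central_if_inverted by (auto simp: D_def Z_def)
  then have "card D \<le> card Z" using fin by (intro card_mono) (auto simp: Z_def)
  then have "Z = K"
    using subgroup_center_in[OF K] K fin inverts_most unfolding D_def Z_def
    by (intro subgroup_eq_if_card_gt_half) auto
  then show abelian: "\<forall>a\<in>K. \<forall>b\<in>K. a \<otimes> b = b \<otimes> a" by (auto simp: Z_def)
  have "subgroup D G"
  proof (rule subgroupI)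
    show "D \<subseteq> carrier G" using K_carrier by (auto simp: D_def)
    have "\<alpha> \<one> = \<one>"
      using \<alpha>_mult[of \<one> \<one>] \<alpha>_closed[of \<one>] subgroup.one_closed[OF K] by (metis l_cancel_one l_one one_closed)
    then show "D \<noteq> {}" using subgroup.one_closed[OF K] by (auto simp: D_def)
    show "inv a \<in> D" if "a \<in> D" for a
    proof -
      have a: "a \<in> K" "inv a \<in> K" "a \<in> carrier G" "\<alpha> a = inv a"
        using that K K_carrier by (auto simp: D_def subgroup.m_inv_closed)
      have "\<alpha> (inv a) \<otimes> \<alpha> a = \<alpha> \<one>" using \<alpha>_mult[OF a(2,1)] a(3) by simp
      also have "\<alpha> \<one> = \<one>" by fact
      finally have "\<alpha> (inv a) = inv (\<alpha> a)"
        using \<alpha>_closed[OF a(1)] \<alpha>_closed[OF a(2)] by (simp add: inv_equality)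
      then show ?thesis using a by (simp add: D_def)
    qed
    show "a \<otimes> b \<in> D" if "a \<in> D" "b \<in> D" for a b
    proof -
      have ab: "a \<in> K" "b \<in> K" "a \<in> carrier G" "b \<in> carrier G" "\<alpha> a = inv a" "\<alpha> b = inv b"
        using that K_carrier by (auto simp: D_def)
      have "\<alpha> (a \<otimes> b) = inv a \<otimes> inv b" using \<alpha>_mult ab by simp
      also have "\<dots> = inv (a \<otimes> b)"
        using abelian ab K by (simp add: inv_mult_group subgroup.m_inv_closed)
      finally show ?thesis using ab K by (simp add: D_def subgroup.m_closed)
    qed
  qed
  then have "D = K"
    using K fin inverts_most unfolding D_def by (intro subgroup_eq_if_card_gt_half) auto
  then show "\<forall>a\<in>K. \<alpha> a = inv a" by (auto simp: D_def)
qed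

end

end

section \<open>Fixed and inverted elements of an endomorphism\<close>

definition abelian_inversion :: "('a, 'b) monoid_scheme \<Rightarrow> ('a \<Rightarrow> 'a) \<Rightarrow> bool" where
  "abelian_inversion R \<phi> \<longleftrightarrow>
       (\<forall>a \<in> carrier R. \<forall>b \<in> carrier R. a \<otimes>\<^bsub>R\<^esub> b = b \<otimes>\<^bsub>R\<^esub> a)
     \<and> (\<exists>a \<in> carrier R. a \<otimes>\<^bsub>R\<^esub> a \<noteq> \<one>\<^bsub>R\<^esub>)
     \<and> (\<forall>a \<in> carrier R. \<phi> a = inv\<^bsub>R\<^esub> a)"

text \<open>\<open>R\<close> is generalized dicyclic over \<open>A = C\<^sub>R(\<phi>)\<close>, and \<open>\<phi>\<close> fixes \<open>A\<close> and inverts every element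
  outside \<open>A\<close>.\<close>
definition dicyclic_bar_iota :: "('a, 'b) monoid_scheme \<Rightarrow> ('a \<Rightarrow> 'a) \<Rightarrow> bool" where
  "dicyclic_bar_iota R \<phi> \<longleftrightarrow> (let A = centralizer_aut R \<phi> in
         (\<forall>a \<in> A. \<forall>b \<in> A. a \<otimes>\<^bsub>R\<^esub> b = b \<otimes>\<^bsub>R\<^esub> a)
       \<and> (\<exists>a \<in> A. a \<otimes>\<^bsub>R\<^esub> a \<noteq> \<one>\<^bsub>R\<^esub>)
       \<and> card (carrier R) = 2 * card A
       \<and> (\<exists>x \<in> carrier R - A.
            x \<otimes>\<^bsub>R\<^esub> x \<in> A
          \<and> x \<otimes>\<^bsub>R\<^esub> x \<noteq> \<one>\<^bsub>R\<^esub>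
          \<and> (x \<otimes>\<^bsub>R\<^esub> x) \<otimes>\<^bsub>R\<^esub> (x \<otimes>\<^bsub>R\<^esub> x) = \<one>\<^bsub>R\<^esub>
          \<and> (\<forall>a \<in> A. x \<otimes>\<^bsub>R\<^esub> a \<otimes>\<^bsub>R\<^esub> inv\<^bsub>R\<^esub> x = inv\<^bsub>R\<^esub> a)
          \<and> (\<forall>a \<in> A. \<phi> a = a \<and> \<phi> (a \<otimes>\<^bsub>R\<^esub> x) = a \<otimes>\<^bsub>R\<^esub> inv\<^bsub>R\<^esub> x)))"

locale group_endomorphism = group G for G (structure) +
  fixes \<phi> :: "'a \<Rightarrow> 'a"
  assumes hom: "\<phi> \<in> hom G G"
begin

abbreviation fixed :: "'a set" where
  "fixed \<equiv> centralizer_aut G \<phi>"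

definition inverted :: "'a set" where
  "inverted = {x \<in> carrier G. \<phi> x = inv x}"

definition mixed_elements :: "'a set" where
  "mixed_elements = carrier G - (fixed \<union> inverted)"

lemma \<phi>_closed: "x \<in> carrier G \<Longrightarrow> \<phi> x \<in> carrier G"
  using hom by (rule hom_in_carrier)

lemma \<phi>_mult: "x \<in> carrier G \<Longrightarrow> y \<in> carrier G \<Longrightarrow> \<phi> (x \<otimes> y) = \<phi> x \<otimes> \<phi> y"
  using hom by (rule hom_mult)

lemma is_group_hom: "group_hom G G \<phi>"
  by (simp add: group_hom_def group_hom_axioms_def hom is_group)

lemma \<phi>_one: "\<phi> \<one> = \<one>"
  using is_group_hom by (rule group_hom.hom_one)

lemma \<phi>_inv: "x \<in> carrier G \<Longrightarrow> \<phi> (inv x) = inv (\<phi> x)"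
  using is_group_hom by (rule group_hom.hom_inv)

lemma subgroup_fixed: "subgroup fixed G"
  by (rule subgroupI) (auto simp: centralizer_aut_def \<phi>_one \<phi>_inv \<phi>_mult)

lemma fixed_carrier: "fixed \<subseteq> carrier G"
  by (auto simp: centralizer_aut_def)

lemma mult_mem_inverted_iff:
  assumes x: "x \<in> inverted" and a: "a \<in> fixed"
  shows "a \<otimes> x \<in> inverted \<longleftrightarrow> x \<otimes> a \<otimes> inv x = inv a"
proof -
  have xG: "x \<in> carrier G" and aG: "a \<in> carrier G" and "\<phi> x = inv x" "\<phi> a = a"
    using x a by (auto simp: inverted_def centralizer_aut_def)
  then have "a \<otimes> x \<in> inverted \<longleftrightarrow> a \<otimes> inv x = inv x \<otimes> inv a"
    by (simp add: inverted_def \<phi>_mult inv_mult_group)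
  also have "\<dots> \<longleftrightarrow> x \<otimes> (a \<otimes> inv x) = x \<otimes> (inv x \<otimes> inv a)"
    using xG aG by simp
  also have "\<dots> \<longleftrightarrow> x \<otimes> a \<otimes> inv x = inv a"
    using xG aG by (simp add: m_assoc[symmetric])
  finally show ?thesis .
qed

lemma card_mixed_elements:
  assumes fin: "finite (carrier G)"
  shows "card mixed_elements + card (fixed \<union> inverted) = card (carrier G)"
proof -
  have "fixed \<union> inverted \<subseteq> carrier G" using fixed_carrier by (auto simp: inverted_def)
  moreover have "finite (fixed \<union> inverted)" using calculation fin by (rule finite_subset)
  ultimately show ?thesis unfolding mixed_elements_def using fin by (simp add: card_Diff_subset card_mono)
qed

lemma card_coset_not_inverted_le:
  assumes fin: "finite (carrier G)" and z: "z \<in> carrier G - fixed"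
  shows "card {a \<in> fixed. a \<otimes> z \<notin> inverted} \<le> card mixed_elements"
proof (rule card_inj_on_le[where f = "\<lambda>a. a \<otimes> z"])
  show "inj_on (\<lambda>a. a \<otimes> z) {a \<in> fixed. a \<otimes> z \<notin> inverted}"
    using z fixed_carrier by (intro inj_onI) (metis (no_types, lifting) Diff_iff mem_Collect_eq subsetD right_cancel)
  show "(\<lambda>a. a \<otimes> z) ` {a \<in> fixed. a \<otimes> z \<notin> inverted} \<subseteq> mixed_elements"
    using mult_notin_subgroup[OF subgroup_fixed _ z] by (auto simp: mixed_elements_def)
  show "finite mixed_elements" using fin by (simp add: mixed_elements_def)
qed

lemma conj_inverts_most_if_few_mixed:
  assumes fin: "finite (carrier G)" and few: "4 * card mixed_elements < card fixed"
    and x: "x \<in> carrier G - fixed" "x \<in> inverted"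
  shows "3 * card fixed < 4 * card {a \<in> fixed. x \<otimes> a \<otimes> inv x = inv a}"
proof -
  have "card fixed = card ({a \<in> fixed. a \<otimes> x \<in> inverted} \<union> {a \<in> fixed. a \<otimes> x \<notin> inverted})"
    by (rule arg_cong[where f = card]) blast
  also have "\<dots> \<le> card {a \<in> fixed. a \<otimes> x \<in> inverted} + card {a \<in> fixed. a \<otimes> x \<notin> inverted}"
    by (rule card_Un_le)
  finally have "card fixed \<le> card {a \<in> fixed. a \<otimes> x \<in> inverted} + card {a \<in> fixed. a \<otimes> x \<notin> inverted}" .
  moreover have "card {a \<in> fixed. a \<otimes> x \<notin> inverted} \<le> card mixed_elements"
    using card_coset_not_inverted_le[OF fin x(1)] .
  moreover have "card {a \<in> fixed. a \<otimes> x \<in> inverted} = card {a \<in> fixed. x \<otimes> a \<otimes> inv x = inv a}"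
    using mult_mem_inverted_iff[OF x(2)] by (intro arg_cong[where f = card]) blast
  ultimately show ?thesis using few by linarith
qed

text \<open>The coset \<open>A y\<close> meets \<open>B\<close>, say in \<open>x\<close>; conjugation by \<open>x\<close> then inverts all of \<open>A\<close>,
  which puts the whole coset \<open>A x = A y\<close> into \<open>B\<close>.\<close>
lemma inverted_outside_fixed_if_few_mixed:
  assumes fin: "finite (carrier G)" and few: "4 * card mixed_elements < card fixed"
  shows "carrier G - fixed \<subseteq> inverted"
proof
  fix y assume y: "y \<in> carrier G - fixed"
  have "card {a \<in> fixed. a \<otimes> y \<notin> inverted} < card fixed"
    using card_coset_not_inverted_le[OF fin y] few by linarith
  then have "{a \<in> fixed. a \<otimes> y \<notin> inverted} \<noteq> fixed" by auto
  then obtain a0 where a0: "a0 \<in> fixed" "a0 \<otimes> y \<in> inverted" by blast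
  define x where "x = a0 \<otimes> y"
  have x: "x \<in> carrier G - fixed" "x \<in> inverted"
    using mult_notin_subgroup[OF subgroup_fixed a0(1) y] a0(2) by (simp_all add: x_def)
  have "finite fixed" using fin fixed_carrier by (rule finite_subset[rotated])
  then have "\<forall>a\<in>fixed. x \<otimes> a \<otimes> inv x = inv a"
    using subgroup_fixed x(1) fixed_carrier conj_inverts_most_if_few_mixed[OF fin few x]
    by (intro abelian_and_inverting_if_inverts_most(2)) (auto simp: m_assoc subsetD)
  then have "inv a0 \<otimes> x \<in> inverted"
    using mult_mem_inverted_iff[OF x(2)] a0(1) subgroup_fixed by (simp add: subgroup.m_inv_closed)
  moreover have "inv a0 \<otimes> x = y"
    using a0(1) y fixed_carrier by (auto simp: x_def m_assoc[symmetric])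
  ultimately show "y \<in> inverted" by simp
qed

lemma conj_inverts_fixed:
  assumes out: "carrier G - fixed \<subseteq> inverted" and x: "x \<in> carrier G - fixed" and a: "a \<in> fixed"
  shows "x \<otimes> a \<otimes> inv x = inv a"
  using mult_mem_inverted_iff[of x a] out x a mult_notin_subgroup[OF subgroup_fixed a x] by blast

lemma abelian_inversion_if_inverts_all:
  assumes inverts: "\<forall>a\<in>carrier G. \<phi> a = inv a" and nid: "\<exists>x\<in>carrier G. \<phi> x \<noteq> x"
  shows "abelian_inversion G \<phi>"
proof -
  have "a \<otimes> b = b \<otimes> a" if "a \<in> carrier G" "b \<in> carrier G" for a b
  proof (rule commute_if_inv_commute[OF that])
    have "inv b \<otimes> inv a = \<phi> (a \<otimes> b)" using inverts that by (simp add: inv_mult_group)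
    also have "\<dots> = \<phi> a \<otimes> \<phi> b" using that by (rule \<phi>_mult)
    also have "\<dots> = inv a \<otimes> inv b" using inverts that by simp
    finally show "inv b \<otimes> inv a = inv a \<otimes> inv b" .
  qed
  moreover obtain x where x: "x \<in> carrier G" "\<phi> x \<noteq> x" using nid by blast
  have "x \<otimes> x \<noteq> \<one>"
  proof
    assume "x \<otimes> x = \<one>"
    then have "inv x = x" using x(1) by (intro inv_equality) auto
    then show False using x inverts by auto
  qed
  ultimately show ?thesis using x(1) inverts by (auto simp: abelian_inversion_def)
qed

lemma mult_fixed_if_outside_inverted:
  assumes out: "carrier G - fixed \<subseteq> inverted"
    and a: "a \<in> fixed" "a \<otimes> a \<noteq> \<one>"
    and x: "x \<in> carrier G - fixed" and y: "y \<in> carrier G - fixed"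
  shows "x \<otimes> y \<in> fixed"
proof (rule ccontr)
  assume "x \<otimes> y \<notin> fixed"
  then have xy: "x \<otimes> y \<in> carrier G - fixed" using x y by simp
  have aG: "a \<in> carrier G" and xG: "x \<in> carrier G" and yG: "y \<in> carrier G"
    using a x y fixed_carrier by auto
  have "inv a = (x \<otimes> y) \<otimes> a \<otimes> inv (x \<otimes> y)" using conj_inverts_fixed[OF out xy a(1)] by simp
  also have "\<dots> = x \<otimes> (y \<otimes> a \<otimes> inv y) \<otimes> inv x" using xG yG aG by (simp add: m_assoc inv_mult_group)
  also have "\<dots> = x \<otimes> inv a \<otimes> inv x" using conj_inverts_fixed[OF out y a(1)] by simp
  also have "\<dots> = a"
    using conj_inverts_fixed[OF out x] a(1) aG subgroup_fixed by (simp add: subgroup.m_inv_closed)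
  finally have "inv a = a" .
  then have "a \<otimes> a = \<one>" using aG by (metis r_inv)
  then show False using a(2) by contradiction
qed

lemma dicyclic_bar_iota_if_index_two:
  assumes fin: "finite (carrier G)" and out: "carrier G - fixed \<subseteq> inverted"
    and nid: "\<exists>x\<in>carrier G. \<phi> x \<noteq> x"
    and a1: "a1 \<in> fixed" "a1 \<otimes> a1 \<noteq> \<one>" and x: "x \<in> carrier G - fixed"
    and index_two: "\<And>y z. y \<in> carrier G - fixed \<Longrightarrow> z \<in> carrier G - fixed \<Longrightarrow> y \<otimes> z \<in> fixed"
  shows "dicyclic_bar_iota G \<phi>"
proof -
  have xG: "x \<in> carrier G" using x by blast
  have \<phi>x: "\<phi> x = inv x" using out x by (auto simp: inverted_def)
  have inv_x: "inv x \<in> carrier G - fixed"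
    using x subgroup_fixed by (metis Diff_iff inv_closed inv_inv subgroup.m_inv_closed)
  have coset: "y \<otimes> inv x \<in> fixed \<and> y = (y \<otimes> inv x) \<otimes> x" if "y \<in> carrier G - fixed" for y
    using index_two[OF that inv_x] that xG by (simp add: m_assoc)
  have \<phi>_coset: "\<phi> (a \<otimes> x) = a \<otimes> inv x" if "a \<in> fixed" for a
    using that fixed_carrier xG \<phi>x by (auto simp: \<phi>_mult centralizer_aut_def)
  have abelian: "a \<otimes> b = b \<otimes> a" if "a \<in> fixed" "b \<in> fixed" for a b
  proof (rule commute_if_inv_commute)
    show aG: "a \<in> carrier G" and bG: "b \<in> carrier G" using that fixed_carrier by auto
    have "inv b \<otimes> inv a = x \<otimes> (a \<otimes> b) \<otimes> inv x"
      using conj_inverts_fixed[OF out x] that subgroup_fixed aG bG by (simp add: inv_mult_group subgroup.m_closed)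
    also have "\<dots> = (x \<otimes> a \<otimes> inv x) \<otimes> (x \<otimes> b \<otimes> inv x)" using aG bG xG by (simp add: m_assoc)
    also have "\<dots> = inv a \<otimes> inv b" using conj_inverts_fixed[OF out x] that by simp
    finally show "inv b \<otimes> inv a = inv a \<otimes> inv b" .
  qed
  have card: "card (carrier G) = 2 * card fixed"
  proof -
    have "carrier G = fixed \<union> (\<lambda>a. a \<otimes> x) ` fixed"
      using coset fixed_carrier xG by auto
    moreover have "fixed \<inter> (\<lambda>a. a \<otimes> x) ` fixed = {}" using mult_notin_subgroup[OF subgroup_fixed _ x] by auto
    moreover have "card ((\<lambda>a. a \<otimes> x) ` fixed) = card fixed"
      using fixed_carrier xG by (intro card_image inj_onI) (metis subsetD right_cancel)
    moreover have "finite fixed" using fin fixed_carrier by (rule finite_subset[rotated])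
    ultimately show ?thesis by (metis card_Un_disjoint finite_imageI mult_2)
  qed
  define w where "w = x \<otimes> x"
  have w: "w \<in> fixed" "w \<in> carrier G" using index_two[OF x x] fixed_carrier by (auto simp: w_def)
  have "w = \<phi> w" using w(1) by (simp add: centralizer_aut_def)
  also have "\<dots> = inv w" using xG \<phi>x by (simp add: w_def \<phi>_mult inv_mult_group)
  finally have ww: "w \<otimes> w = \<one>" using w(2) by (metis r_inv)
  have "w \<noteq> \<one>"
  proof
    assume "w = \<one>"
    then have "inv x = x" using xG by (intro inv_equality) (auto simp: w_def)
    then have "\<phi> y = y" if "y \<in> carrier G" for y
      using that coset[of y] \<phi>_coset[of "y \<otimes> inv x"] by (cases "y \<in> fixed") (auto simp: centralizer_aut_def)
    then show False using nid by blast
  qed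
  then show ?thesis
    unfolding dicyclic_bar_iota_def Let_def
    using abelian a1 card x w(1) ww conj_inverts_fixed[OF out x] \<phi>_coset
    by (auto simp: w_def centralizer_aut_def)
qed

lemma dicyclic_or_inversion_if_outside_inverted:
  assumes fin: "finite (carrier G)" and out: "carrier G - fixed \<subseteq> inverted"
    and nid: "\<exists>x\<in>carrier G. \<phi> x \<noteq> x"
  shows "dicyclic_bar_iota G \<phi> \<or> abelian_inversion G \<phi>"
proof (cases "\<forall>a\<in>fixed. a \<otimes> a = \<one>")
  case True
  have "\<phi> a = inv a" if "a \<in> carrier G" for a
  proof (cases "a \<in> fixed")
    case True
    then have "inv a = a" using \<open>\<forall>a\<in>fixed. a \<otimes> a = \<one>\<close> that by (intro inv_equality) auto
    then show ?thesis using True by (simp add: centralizer_aut_def)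
  qed (use out that in \<open>auto simp: inverted_def\<close>)
  then show ?thesis using abelian_inversion_if_inverts_all nid by blast
next
  case False
  then obtain a1 where a1: "a1 \<in> fixed" "a1 \<otimes> a1 \<noteq> \<one>" by blast
  obtain x where x: "x \<in> carrier G - fixed" using nid by (auto simp: centralizer_aut_def)
  show ?thesis
    using dicyclic_bar_iota_if_index_two[OF fin out nid a1 x] mult_fixed_if_outside_inverted[OF out a1] by blast
qed

lemma card_le_24_mixed_or_inversion:
  assumes fin: "finite (carrier G)" and nid: "\<exists>x\<in>carrier G. \<phi> x \<noteq> x"
    and "card fixed \<le> 4 * card mixed_elements"
  shows "card (carrier G) \<le> 24 * card mixed_elements \<or> abelian_inversion G \<phi>"
proof (cases "3 * card (carrier G) < 4 * card inverted")
  case True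
  then have "\<forall>a\<in>carrier G. \<phi> a = inv a"
    using subgroup_self fin \<phi>_closed \<phi>_mult unfolding inverted_def
    by (intro abelian_and_inverting_if_inverts_most(2)) auto
  then show ?thesis using abelian_inversion_if_inverts_all nid by blast
next
  case False
  have "card (carrier G) = card mixed_elements + card (fixed \<union> inverted)"
    using card_mixed_elements[OF fin] by simp
  moreover have "card (fixed \<union> inverted) \<le> card fixed + card inverted" by (rule card_Un_le)
  ultimately show ?thesis using False assms(3) by linarith
qed

lemma dicyclic_or_inversion_or_many_mixed:
  assumes fin: "finite (carrier G)" and nid: "\<exists>x\<in>carrier G. \<phi> x \<noteq> x"
  shows "dicyclic_bar_iota G \<phi> \<or> abelian_inversion G \<phi> \<or> card (carrier G) \<le> 24 * card mixed_elements"
proof (cases "4 * card mixed_elements < card fixed")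
  case True
  then show ?thesis
    using dicyclic_or_inversion_if_outside_inverted[OF fin inverted_outside_fixed_if_few_mixed[OF fin True] nid]
    by blast
next
  case False
  then show ?thesis using card_le_24_mixed_or_inversion[OF fin nid] by linarith
qed

lemma card_le_double_mixed_if_not_involutive:
  assumes fin: "finite (carrier G)" and "\<exists>x\<in>carrier G. \<phi> (\<phi> x) \<noteq> x"
  shows "card (carrier G) \<le> 2 * card mixed_elements"
proof -
  define C where "C = {x \<in> carrier G. \<phi> (\<phi> x) = x}"
  have "subgroup C G"
    unfolding C_def by (rule subgroupI) (auto simp: \<phi>_one \<phi>_inv \<phi>_mult \<phi>_closed)
  moreover have "C \<noteq> carrier G" using assms(2) by (auto simp: C_def)
  ultimately have "2 * card C \<le> card (carrier G)"
    using fin by (intro card_subgroup_le_half[OF _ subgroup_self]) (auto simp: C_def)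
  moreover have "fixed \<union> inverted \<subseteq> C" by (auto simp: C_def centralizer_aut_def inverted_def \<phi>_inv)
  then have "card (fixed \<union> inverted) \<le> card C" using fin by (intro card_mono) (auto simp: C_def)
  ultimately show ?thesis using card_mixed_elements[OF fin] by linarith
qed

end

lemma (in group) c_num_eq:
  assumes "finite (carrier G)"
  shows "c_num G = card (carrier G) - card {x \<in> carrier G. inv x \<noteq> x} / 2"
proof -
  have "involution_set G = {x \<in> carrier G. inv x = x}"
    unfolding involution_set_def by (metis (no_types, lifting) inv_equality r_inv)
  then have "card (involution_set G) + card {x \<in> carrier G. inv x \<noteq> x} = card (carrier G)"
    using assms by (subst card_Un_disjoint[symmetric]) (auto intro: arg_cong[where f = card])
  from arg_cong[where f = real, OF this] show ?thesis unfolding c_num_def of_nat_add by (simp add: field_simps)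
qed

lemma (in group_endomorphism) card_invariant_inverse_closed_le:
  assumes fin: "finite (carrier G)" and inj: "inj_on \<phi> (carrier G)"
    and many_mixed: "card (carrier G) \<le> 24 * card mixed_elements"
  shows "real (card {S. S \<subseteq> carrier G \<and> inverse_closed G S \<and> \<phi> ` S = S})
    \<le> 2 powr (c_num G - real (card (carrier G)) / 96)"
proof -
  interpret I: commuting_involution "carrier G" "m_inv G" \<phi>
    by unfold_locales (auto simp: fin \<phi>_closed \<phi>_inv inj)
  have sets: "{S. S \<subseteq> carrier G \<and> inverse_closed G S \<and> \<phi> ` S = S} = I.invariant_sets"
    by (simp add: I.invariant_sets_def inverse_closed_def)
  have mixed: "I.mixed = mixed_elements"
    by (auto simp: I.mixed_def mixed_elements_def inverted_def centralizer_aut_def)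
  obtain d :: real where d: "6 \<le> d \<or> 4 \<le> d \<and> (\<forall>x\<in>carrier G. \<phi> (\<phi> x) = x)"
    and d_bound: "card (carrier G) / 96 \<le> card mixed_elements / d"
  proof (cases "\<forall>x\<in>carrier G. \<phi> (\<phi> x) = x")
    case True
    then show ?thesis using that[of 4] many_mixed by simp
  next
    case False
    then show ?thesis
      using that[of 6] card_le_double_mixed_if_not_involutive[OF fin] by simp
  qed
  have "real (card I.invariant_sets)
      \<le> 2 powr (card (carrier G) - card {x \<in> carrier G. inv x \<noteq> x} / 2 - card I.mixed / d)"
    using d by (rule I.card_invariant_sets_le)
  also have "\<dots> \<le> 2 powr (c_num G - real (card (carrier G)) / 96)"
    using d_bound by (simp add: c_num_eq[OF fin] mixed)
  finally show ?thesis by (simp add: sets)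
qed

theorem lemma2p4:
  fixes R :: "('a, 'b) monoid_scheme" and \<phi> :: "'a \<Rightarrow> 'a"
  assumes "group R" and "finite (carrier R)"
    and "\<phi> \<in> iso R R"
    and "\<exists>x \<in> carrier R. \<phi> x \<noteq> x"
  shows "real (card {S. S \<subseteq> carrier R \<and> inverse_closed R S \<and> \<phi> ` S = S})
           \<le> 2 powr (c_num R - real (card (carrier R)) / 96)
    \<or> (let A = centralizer_aut R \<phi> in
         (\<forall>a \<in> A. \<forall>b \<in> A. a \<otimes>\<^bsub>R\<^esub> b = b \<otimes>\<^bsub>R\<^esub> a)
       \<and> (\<exists>a \<in> A. a \<otimes>\<^bsub>R\<^esub> a \<noteq> \<one>\<^bsub>R\<^esub>)
       \<and> card (carrier R) = 2 * card A
       \<and> (\<exists>x \<in> carrier R - A.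
            x \<otimes>\<^bsub>R\<^esub> x \<in> A
          \<and> x \<otimes>\<^bsub>R\<^esub> x \<noteq> \<one>\<^bsub>R\<^esub>
          \<and> (x \<otimes>\<^bsub>R\<^esub> x) \<otimes>\<^bsub>R\<^esub> (x \<otimes>\<^bsub>R\<^esub> x) = \<one>\<^bsub>R\<^esub>
          \<and> (\<forall>a \<in> A. x \<otimes>\<^bsub>R\<^esub> a \<otimes>\<^bsub>R\<^esub> inv\<^bsub>R\<^esub> x = inv\<^bsub>R\<^esub> a)
          \<and> (\<forall>a \<in> A. \<phi> a = a \<and> \<phi> (a \<otimes>\<^bsub>R\<^esub> x) = a \<otimes>\<^bsub>R\<^esub> inv\<^bsub>R\<^esub> x)))
    \<or> ((\<forall>a \<in> carrier R. \<forall>b \<in> carrier R. a \<otimes>\<^bsub>R\<^esub> b = b \<otimes>\<^bsub>R\<^esub> a)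
       \<and> (\<exists>a \<in> carrier R. a \<otimes>\<^bsub>R\<^esub> a \<noteq> \<one>\<^bsub>R\<^esub>)
       \<and> (\<forall>a \<in> carrier R. \<phi> a = inv\<^bsub>R\<^esub> a))"
proof -
  have "group_endomorphism R \<phi>"
    using assms(1,3) by (simp add: group_endomorphism_def group_endomorphism_axioms_def iso_def)
  then interpret group_endomorphism R \<phi> .
  have inj: "inj_on \<phi> (carrier R)" using assms(3) by (simp add: iso_def bij_betw_def)
  show ?thesis
    using dicyclic_or_inversion_or_many_mixed[OF assms(2,4)] card_invariant_inverse_closed_le[OF assms(2) inj]
    unfolding dicyclic_bar_iota_def abelian_inversion_def by blast
qed

end
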